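(* Let $f_{ij}>0$ for $i\neq j\in\{g,p,s\}$, let $v_g,v_s>0$, and assume $v_sF_{gp}>v_gF_{sp}$ (equivalently $V<0$). Consider nonnegative, not identically zero, time-independent solutions $P_g(x),P_p(x),P_s(x)$, $x\in[0,\infty)$, of $$\begin{aligned} 0&=-v_g P_g'-(f_{gs}+f_{gp})P_g+f_{pg}P_p+f_{sg}P_s,\\ 0&=f_{gp}P_g-(f_{pg}+f_{ps})P_p+f_{sp}P_s,\\ 0&=v_s P_s'+f_{gs}P_g+f_{ps}P_p-(f_{sg}+f_{sp})P_s, \end{aligned}$$ with $P_g(x),P_s(x)\to0$ as $x\to\infty$ and $P_g,P_s$ integrable on $[0,\infty)$. Then $P_g$, $P_p$ and $P_s$ are each constant multiples of $e^{-x/\langle L\rangle}$ (in particular $P_s=\frac{v_g}{v_s}P_g$), so the normalized length distribution is exponential with mean $$\langle L\rangle=\frac{v_sv_g}{v_s\frac{F_{gp}}{F_p}-v_g\frac{F_{sp}}{F_p}}=\frac{v_gv_sF_p}{v_sF_{gp}-v_gF_{sp}}.$$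
   Context: $P_i(x,t)$, $i\in\{g,p,s\}$, is the probability density of finding the microtubule at time $t$ in state growth ($g$, growing at velocity $v_g$), pause ($p$) or shrinkage ($s$, shrinking at velocity $v_s$) with length $x$; $f_{ij}$ is the transition rate from state $i$ to state $j$. The system in the claim is the steady state ($\partial_t=0$) of the master equations $\partial_tP_g=-v_g\partial_xP_g-(f_{gs}+f_{gp})P_g+f_{pg}P_p+f_{sg}P_s$, $\partial_tP_p=f_{gp}P_g-(f_{pg}+f_{ps})P_p+f_{sp}P_s$, $\partial_tP_s=v_s\partial_xP_s+f_{gs}P_g+f_{ps}P_p-(f_{sg}+f_{sp})P_s$. Notation: $F_p=f_{pg}+f_{ps}$; $F_{gp}=f_{gs}f_{pg}+f_{gs}f_{ps}+f_{gp}f_{ps}$; $F_{sp}=f_{sg}f_{pg}+f_{sg}f_{ps}+f_{sp}f_{pg}$; $F_{sg}=f_{sp}f_{gs}+f_{sp}f_{gp}+f_{sg}f_{gp}$; $\Omega=F_{sp}+F_{gp}+F_{sg}$; $V=(v_gF_{sp}-v_sF_{gp})/\Omega$. *)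

theory Defs
  imports "HOL-Analysis.Analysis"
begin

definition Fp :: "real \<Rightarrow> real \<Rightarrow> real" where
  "Fp fpg fps = fpg + fps"

definition Fgp :: "real \<Rightarrow> real \<Rightarrow> real \<Rightarrow> real \<Rightarrow> real" where
  "Fgp fgs fgp fpg fps = fgs * fpg + fgs * fps + fgp * fps"

definition Fsp :: "real \<Rightarrow> real \<Rightarrow> real \<Rightarrow> real \<Rightarrow> real" where
  "Fsp fsg fsp fpg fps = fsg * fpg + fsg * fps + fsp * fpg"

end

theory Submission
  imports Defs
begin

text \<open>Adding the three steady-state equations gives \<open>v\<^sub>g P\<^sub>g' = v\<^sub>s P\<^sub>s'\<close>, so the flux
  \<open>v\<^sub>g P\<^sub>g - v\<^sub>s P\<^sub>s\<close> is constant, and it vanishes because both densities decay at infinity.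
  Substituting \<open>P\<^sub>s = (v\<^sub>g/v\<^sub>s) P\<^sub>g\<close> and eliminating \<open>P\<^sub>p\<close> through the pause equation turns the
  growth equation into \<open>P\<^sub>g' = -P\<^sub>g/\<langle>L\<rangle>\<close>, whose solutions are multiples of \<open>e\<^sup>-\<^sup>x\<^sup>/\<^sup>\<langle>\<^sup>L\<^sup>\<rangle>\<close>;
  the other two densities are fixed multiples of \<open>P\<^sub>g\<close>.\<close>

lemma deriv_zero_tendsto_zero_imp_zero:
  fixes f :: "real \<Rightarrow> real"
  assumes deriv: "\<And>x. x \<ge> a \<Longrightarrow> (f has_real_derivative 0) (at x within {a..})"
    and lim: "(f \<longlongrightarrow> 0) at_top"
    and "x \<ge> a"
  shows "f x = 0"
proof -
  obtain c where c: "\<And>y. y \<ge> a \<Longrightarrow> f y = c"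
    using has_field_derivative_zero_constant[of "{a..}" f] deriv by auto
  have "eventually (\<lambda>y. f y = c) at_top"
    using eventually_ge_at_top[of a] by eventually_elim (rule c)
  then have "(f \<longlongrightarrow> c) at_top"
    by (rule tendsto_eventually)
  with lim have "c = 0"
    using tendsto_unique trivial_limit_at_top_linorder by blast
  with c \<open>x \<ge> a\<close> show ?thesis by simp
qed

lemma linear_ode_solution_exp:
  fixes f :: "real \<Rightarrow> real"
  assumes deriv: "\<And>x. x \<ge> 0 \<Longrightarrow> (f has_real_derivative k * f x) (at x within {0..})"
    and "x \<ge> 0"
  shows "f x = f 0 * exp (k * x)"
proof -
  obtain c where c: "\<And>y. y \<ge> 0 \<Longrightarrow> f y * exp (- k * y) = c"
  proof -
    have "\<exists>c. \<forall>y\<in>{0::real..}. f y * exp (- k * y) = c"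
    proof (rule has_field_derivative_zero_constant)
      fix y :: real assume "y \<in> {0..}"
      then have "((\<lambda>y. f y * exp (- k * y)) has_real_derivative
                  k * f y * exp (- k * y) + f y * (exp (- k * y) * (- k))) (at y within {0..})"
        using deriv by (auto intro!: derivative_eq_intros)
      then show "((\<lambda>y. f y * exp (- k * y)) has_real_derivative 0) (at y within {0..})"
        by (simp add: algebra_simps)
    qed simp
    with that show ?thesis by auto
  qed
  have "f x = f x * exp (- k * x) * exp (k * x)"
    by (simp add: mult.assoc exp_add[symmetric])
  also have "\<dots> = f 0 * exp (k * x)"
    using c[OF \<open>x \<ge> 0\<close>] c[of 0] by simp
  finally show ?thesis .
qed

lemma has_integral_exp_neg_div:
  assumes "L > 0"
  shows "((\<lambda>x::real. exp (- x / L)) has_integral L) {0..}"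
  using has_integral_exp_minus_to_infinity[of "1 / L" 0] assms by simp

lemma normalized_exponential_density:
  fixes P :: "real \<Rightarrow> real"
  assumes "L > 0" "M \<noteq> 0"
    and P: "\<And>x. x \<ge> 0 \<Longrightarrow> P x = M * exp (- x / L)"
    and "x \<ge> 0"
  shows "P x / integral {0..} P = exp (- x / L) / L"
proof -
  have "(P has_integral M * L) {0..}"
    using has_integral_mult_right[OF has_integral_exp_neg_div[OF \<open>L > 0\<close>], of M]
    by (rule has_integral_cong[THEN iffD1, rotated]) (simp add: P)
  then have "integral {0..} P = M * L"
    by (rule integral_unique)
  with assms show ?thesis by simp
qed

lemma growth_eq_decay_rate:
  fixes g p s dg :: real
  assumes "vg > 0" "vs > 0" "Fp fpg fps \<noteq> 0"
    and growth: "0 = - vg * dg - (fgs + fgp) * g + fpg * p + fsg * s"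
    and pause: "0 = fgp * g - (fpg + fps) * p + fsp * s"
    and flux: "s = vg / vs * g"
  shows "dg = - (vs * Fgp fgs fgp fpg fps - vg * Fsp fsg fsp fpg fps)
                / (vg * vs * Fp fpg fps) * g"
proof -
  have pause': "Fp fpg fps * p = fgp * g + fsp * s"
    using pause by (simp add: Fp_def algebra_simps)
  have growth': "vg * dg = fsg * s - (fgs + fgp) * g + fpg * p"
    using growth by (simp add: algebra_simps)
  have "Fp fpg fps * vg * dg = Fp fpg fps * (vg * dg)"
    by simp
  also have "\<dots> = Fp fpg fps * (fsg * s - (fgs + fgp) * g) + fpg * (Fp fpg fps * p)"
    unfolding growth' by (simp add: algebra_simps)
  also have "\<dots> = Fsp fsg fsp fpg fps * s - Fgp fgs fgp fpg fps * g"
    unfolding pause' by (simp add: Fp_def Fgp_def Fsp_def algebra_simps)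
  finally show ?thesis
    using assms(1-3) unfolding flux by (simp add: field_simps)
qed

lemma zero_net_flux:
  fixes Pg Pp Ps dPg dPs :: "real \<Rightarrow> real"
  assumes "vs > 0"
    and derg: "\<And>x. x \<ge> 0 \<Longrightarrow> (Pg has_real_derivative dPg x) (at x within {0..})"
    and ders: "\<And>x. x \<ge> 0 \<Longrightarrow> (Ps has_real_derivative dPs x) (at x within {0..})"
    and eqg: "\<And>x. x \<ge> 0 \<Longrightarrow>
       0 = - vg * dPg x - (fgs + fgp) * Pg x + fpg * Pp x + fsg * Ps x"
    and eqp: "\<And>x. x \<ge> 0 \<Longrightarrow>
       0 = fgp * Pg x - (fpg + fps) * Pp x + fsp * Ps x"
    and eqs: "\<And>x. x \<ge> 0 \<Longrightarrow>
       0 = vs * dPs x + fgs * Pg x + fps * Pp x - (fsg + fsp) * Ps x"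
    and limg: "(Pg \<longlongrightarrow> 0) at_top"
    and lims: "(Ps \<longlongrightarrow> 0) at_top"
    and "x \<ge> 0"
  shows "Ps x = vg / vs * Pg x"
proof -
  have "vg * Pg x - vs * Ps x = 0"
  proof (rule deriv_zero_tendsto_zero_imp_zero[OF _ _ \<open>x \<ge> 0\<close>])
    fix y :: real assume y: "y \<ge> 0"
    have "vg * dPg y - vs * dPs y = 0"
      using eqg[OF y] eqp[OF y] eqs[OF y] by (simp add: algebra_simps)
    with DERIV_diff[OF DERIV_cmult[OF derg[OF y]] DERIV_cmult[OF ders[OF y]], of vg vs]
    show "((\<lambda>x. vg * Pg x - vs * Ps x) has_real_derivative 0) (at y within {0..})"
      by simp
  qed (use tendsto_diff[OF tendsto_mult_right_zero[OF limg] tendsto_mult_right_zero[OF lims]] in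
       \<open>simp add: mult.commute\<close>)
  with \<open>vs > 0\<close> show ?thesis by (simp add: field_simps)
qed

theorem lemma2:
  fixes fgs fgp fpg fps fsg fsp vg vs :: real
    and Pg Pp Ps dPg dPs :: "real \<Rightarrow> real"
  assumes rates: "fgs > 0" "fgp > 0" "fpg > 0" "fps > 0" "fsg > 0" "fsp > 0"
    and vel: "vg > 0" "vs > 0"
    and Vneg: "vs * Fgp fgs fgp fpg fps > vg * Fsp fsg fsp fpg fps"
    and nonneg: "\<And>x. x \<ge> 0 \<Longrightarrow> Pg x \<ge> 0 \<and> Pp x \<ge> 0 \<and> Ps x \<ge> 0"
    and nonzero: "\<exists>x\<ge>0. Pg x \<noteq> 0 \<or> Pp x \<noteq> 0 \<or> Ps x \<noteq> 0"
    and derg: "\<And>x. x \<ge> 0 \<Longrightarrow> (Pg has_real_derivative dPg x) (at x within {0..})"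
    and ders: "\<And>x. x \<ge> 0 \<Longrightarrow> (Ps has_real_derivative dPs x) (at x within {0..})"
    and eqg: "\<And>x. x \<ge> 0 \<Longrightarrow>
       0 = - vg * dPg x - (fgs + fgp) * Pg x + fpg * Pp x + fsg * Ps x"
    and eqp: "\<And>x. x \<ge> 0 \<Longrightarrow>
       0 = fgp * Pg x - (fpg + fps) * Pp x + fsp * Ps x"
    and eqs: "\<And>x. x \<ge> 0 \<Longrightarrow>
       0 = vs * dPs x + fgs * Pg x + fps * Pp x - (fsg + fsp) * Ps x"
    and limg: "(Pg \<longlongrightarrow> 0) at_top"
    and lims: "(Ps \<longlongrightarrow> 0) at_top"
    and intg: "Pg integrable_on {0..}"
    and ints: "Ps integrable_on {0..}"
  shows "let L = vg * vs * Fp fpg fps /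
                 (vs * Fgp fgs fgp fpg fps - vg * Fsp fsg fsp fpg fps)
         in L > 0
          \<and> (\<exists>cg cp cs. \<forall>x\<ge>0. Pg x = cg * exp (- x / L) \<and> Pp x = cp * exp (- x / L)
                                 \<and> Ps x = cs * exp (- x / L))
          \<and> (\<forall>x\<ge>0. Ps x = vg / vs * Pg x)
          \<and> (\<forall>x\<ge>0. (Pg x + Pp x + Ps x) / integral {0..} (\<lambda>y. Pg y + Pp y + Ps y)
                     = exp (- x / L) / L)"
proof -
  define F where "F = Fp fpg fps"
  define L where "L = vg * vs * F / (vs * Fgp fgs fgp fpg fps - vg * Fsp fsg fsp fpg fps)"
  have "F > 0" using rates by (simp add: F_def Fp_def)
  then have "L > 0" using Vneg vel by (simp add: L_def)
  have Ps: "Ps x = vg / vs * Pg x" if "x \<ge> 0" for x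
    using zero_net_flux[OF _ derg ders eqg eqp eqs limg lims that] vel by simp
  define kp where "kp = (fgp + fsp * (vg / vs)) / F"
  have Pp: "Pp x = kp * Pg x" if "x \<ge> 0" for x
    using eqp[OF that] Ps[OF that] \<open>F > 0\<close> by (simp add: kp_def F_def Fp_def field_simps)
  define cg where "cg = Pg 0"
  have "(Pg has_real_derivative - 1 / L * Pg x) (at x within {0..})" if "x \<ge> 0" for x
    using derg[OF that] growth_eq_decay_rate[OF vel _ eqg eqp Ps, OF _ that that that] \<open>F > 0\<close>
    by (simp add: L_def F_def)
  then have Pg: "Pg x = cg * exp (- x / L)" if "x \<ge> 0" for x
    using linear_ode_solution_exp[of Pg "- 1 / L" x] that by (simp add: cg_def)
  obtain x0 where "x0 \<ge> 0" "Pg x0 \<noteq> 0 \<or> Pp x0 \<noteq> 0 \<or> Ps x0 \<noteq> 0"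
    using nonzero by blast
  then have "cg \<noteq> 0"
    using Pg[of x0] Pp[of x0] Ps[of x0] by auto
  moreover have "kp > 0"
    unfolding kp_def using rates vel \<open>F > 0\<close> by (simp add: add_pos_pos)
  then have "1 + kp + vg / vs > 0"
    using vel by (simp add: add_pos_pos)
  ultimately have "(1 + kp + vg / vs) * cg \<noteq> 0"
    by simp
  moreover have "Pg y + Pp y + Ps y = (1 + kp + vg / vs) * cg * exp (- y / L)"
    if "y \<ge> 0" for y
    using Pg[OF that] Pp[OF that] Ps[OF that] by (simp add: algebra_simps)
  ultimately have normalized: "(Pg x + Pp x + Ps x) / integral {0..} (\<lambda>y. Pg y + Pp y + Ps y)
                          = exp (- x / L) / L" if "x \<ge> 0" for x
    using normalized_exponential_density[OF \<open>L > 0\<close>, of _ "\<lambda>y. Pg y + Pp y + Ps y" x] that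
    by simp
  moreover have "\<forall>x\<ge>0. Pg x = cg * exp (- x / L) \<and> Pp x = (kp * cg) * exp (- x / L)
                         \<and> Ps x = (vg / vs * cg) * exp (- x / L)"
    using Pg Pp Ps by simp
  ultimately show ?thesis
    unfolding Let_def F_def[symmetric] L_def[symmetric]
    using \<open>L > 0\<close> Ps by blast
qed

end
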